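(* Let $\{\lambda_{-n}\}_{n\in\mathbb{J}}$ be a family of Witt vectors $\lambda_{-n}=(\lambda_{-n,0},\lambda_{-n,1},\dots)\in\mathbf{W}(\mathcal{O}_K)$, and let $(\phi_{-n,0},\phi_{-n,1},\dots)$ be the phantom vector of $\lambda_{-n}$. The formal series $$g^-(T):=\sum_{n\in\mathbb{J}}\sum_{m\ge0}-n\,\phi_{-n,m}\,T^{-np^m}$$ belongs to $\mathcal{E}_K$ if and only if $|\lambda_{-n,m}|<1$ for all $n\in\mathbb{J}$ and all $m\ge0$, and $\lim_{n\in\mathbb{J},\,n\to\infty}\lambda_{-n,m}=0$ for all $m\ge0$.
   Context: $K$ is a field of characteristic $0$, complete for a non-archimedean absolute value, residue field of characteristic $p>0$; $\mathcal{O}_K=\{|x|\le1\}$. $\mathcal{E}_K$ is the ring of Laurent series $\sum_{i\in\mathbb{Z}}a_iT^i$ over $K$ with $\sup|a_i|<\infty$ and $|a_i|\to0$ as $i\to-\infty$. $\mathbb{J}=\{n\in\mathbb{Z}:n\ge1,\ p\nmid n\}$. $\mathbf{W}(\mathcal{O}_K)$ is the ring of $p$-typical Witt vectors with entries in $\mathcal{O}_K$; the phantom vector of $\lambda=(\lambda_0,\lambda_1,\dots)$ is $(\phi_0,\phi_1,\ldots)$, $\phi_m=\sum_{i=0}^mp^i\lambda_i^{p^{m-i}}$. *)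

theory Defs
  imports Complex_Main "HOL-Computational_Algebra.Primes"
begin

text \<open>A field K of characteristic 0 (type class field_char_0) with a non-archimedean
absolute value av, complete for av, whose residue field O_K/m_K has characteristic
the prime p (equivalently |p| < 1).\<close>

definition nonarch_abs :: "('a::field_char_0 \<Rightarrow> real) \<Rightarrow> bool" where
  "nonarch_abs av \<longleftrightarrow>
     (\<forall>x. 0 \<le> av x) \<and> (\<forall>x. av x = 0 \<longleftrightarrow> x = 0) \<and>
     (\<forall>x y. av (x * y) = av x * av y) \<and>
     (\<forall>x y. av (x + y) \<le> max (av x) (av y))"

definition av_complete :: "('a::field_char_0 \<Rightarrow> real) \<Rightarrow> bool" where
  "av_complete av \<longleftrightarrow>
     (\<forall>X::nat \<Rightarrow> 'a. (\<forall>e>0. \<exists>N. \<forall>m\<ge>N. \<forall>n\<ge>N. av (X m - X n) < e) \<longrightarrow>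
        (\<exists>L. \<forall>e>0. \<exists>N. \<forall>n\<ge>N. av (X n - L) < e))"

definition valued_field_setup :: "('a::field_char_0 \<Rightarrow> real) \<Rightarrow> nat \<Rightarrow> bool" where
  "valued_field_setup av p \<longleftrightarrow>
     nonarch_abs av \<and> av_complete av \<and> prime p \<and> av (of_nat p) < 1"

definition E_K :: "('a::field_char_0 \<Rightarrow> real) \<Rightarrow> (int \<Rightarrow> 'a) set" where
  "E_K av = {a. bdd_above (range (\<lambda>i. av (a i))) \<and>
               (\<forall>e>0. \<exists>N. \<forall>i. i \<le> N \<longrightarrow> av (a i) < e)}"

definition J :: "nat \<Rightarrow> nat set" where
  "J p = {n. 1 \<le> n \<and> \<not> p dvd n}"

text \<open>Witt vectors with entries in O_K: sequences with all entries of absolute value at most 1.\<close>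

definition witt_OK :: "('a::field_char_0 \<Rightarrow> real) \<Rightarrow> (nat \<Rightarrow> 'a) set" where
  "witt_OK av = {l. \<forall>i. av (l i) \<le> 1}"

definition phantom :: "nat \<Rightarrow> (nat \<Rightarrow> 'a::field_char_0) \<Rightarrow> nat \<Rightarrow> 'a" where
  "phantom p l m = (\<Sum>i\<le>m. of_nat (p ^ i) * l i ^ (p ^ (m - i)))"

text \<open>Coefficient of T^i in g^-(T) = sum_{n in J} sum_{m>=0} -n phi_{-n,m} T^{-n p^m};
lam n is the Witt vector lambda_{-n}.\<close>

definition g_minus :: "nat \<Rightarrow> (nat \<Rightarrow> nat \<Rightarrow> 'a::field_char_0) \<Rightarrow> int \<Rightarrow> 'a" where
  "g_minus p lam i =
     (\<Sum>(n, m) \<in> {(n, m). n \<in> J p \<and> int (n * p ^ m) = - i}.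
        - (of_nat n) * phantom p (lam n) m)"

end

theory Submission
  imports Defs
begin

text \<open>The coefficient of \<open>T^(-n p^m)\<close> in \<open>g^-\<close> is \<open>-n \<phi>_{-n,m}\<close>, and \<open>|n| = 1\<close> because
  \<open>p\<close> does not divide \<open>n\<close>; all coefficients are integral. So \<open>g^-\<close> lies in \<open>\<E>_K\<close>
  exactly when \<open>|\<phi>_{-n,m}| \<rightarrow> 0\<close> as \<open>n p^m \<rightarrow> \<infinity>\<close>, and everything reduces to the
  ultrametric inequality applied to \<open>\<phi>_m = \<Sum>_{i\<le>m} p^i \<lambda>_i^(p^(m-i))\<close>.
  If all \<open>|\<lambda>_{-n,i}| < 1\<close>, each term is small: either \<open>|p|^i\<close> is small, or \<open>n\<close> is large
  and \<open>|\<lambda>_{-n,i}|\<close> is small, or \<open>m\<close> is large and \<open>|\<lambda>_{-n,i}|^(p^(m-i))\<close> is small for the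
  finitely many remaining \<open>(n, i)\<close>. Conversely, \<open>p^m \<lambda>_m = \<phi>_m - \<Sum>_{i<m} \<dots>\<close> gives
  \<open>\<lambda>_{-n,m} \<rightarrow> 0\<close> by induction on \<open>m\<close>; and if \<open>k\<close> is the first index with
  \<open>|\<lambda>_k| = 1\<close>, the term \<open>p^k \<lambda>_k^(p^(m-k))\<close> strictly dominates all others for large
  \<open>m\<close>, so \<open>|\<phi>_m| = |p|^k\<close> does not tend to \<open>0\<close>.\<close>

locale ultrametric_abs =
  fixes av :: "'a::field_char_0 \<Rightarrow> real"
  assumes nonarch: "nonarch_abs av"
begin

lemma av_nonneg: "0 \<le> av x"
  using nonarch by (simp add: nonarch_abs_def)

lemma av_mult: "av (x * y) = av x * av y"
  using nonarch by (simp add: nonarch_abs_def)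

lemma av_add_le: "av (x + y) \<le> max (av x) (av y)"
  using nonarch by (simp add: nonarch_abs_def)

lemma av_eq_0_iff: "av x = 0 \<longleftrightarrow> x = 0"
  using nonarch by (simp add: nonarch_abs_def)

lemma av_zero [simp]: "av 0 = 0"
  by (simp add: av_eq_0_iff)

lemma av_one [simp]: "av 1 = 1"
proof -
  have "av 1 = av 1 * av 1"
    using av_mult[of 1 1] by simp
  moreover have "av 1 \<noteq> 0"
    by (simp add: av_eq_0_iff)
  ultimately show ?thesis
    by simp
qed

lemma av_power: "av (x ^ k) = av x ^ k"
  by (induction k) (simp_all add: av_mult)

lemma av_minus: "av (- x) = av x"
proof -
  have "av (-1) ^ 2 = 1"
    using av_power[of "-1" 2] by simp
  then have "av (-1) = 1"
    using av_nonneg[of "-1"] by (simp add: power2_eq_1_iff)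
  then show ?thesis
    using av_mult[of "-1" x] by simp
qed

lemma av_diff_le: "av (x - y) \<le> max (av x) (av y)"
  using av_add_le[of x "- y"] by (simp add: av_minus)

lemma av_add_eq_left:
  assumes "av y < av x"
  shows "av (x + y) = av x"
proof -
  have "av x \<le> max (av (x + y)) (av y)"
    using av_diff_le[of "x + y" y] by simp
  with assms have "av x \<le> av (x + y)"
    by linarith
  with assms av_add_le[of x y] show ?thesis
    by simp
qed

lemma av_sum_le:
  assumes "0 \<le> c" "\<And>i. i \<in> S \<Longrightarrow> av (f i) \<le> c"
  shows "av (sum f S) \<le> c"
  using assms(2)
proof (induction S rule: infinite_finite_induct)
  case (insert x F)
  then have "av (f x) \<le> c" "av (sum f F) \<le> c"
    by simp_all
  moreover have "av (f x + sum f F) \<le> max (av (f x)) (av (sum f F))"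
    by (rule av_add_le)
  ultimately show ?case
    using insert.hyps by simp
qed (use assms(1) in simp_all)

lemma av_sum_less:
  assumes "0 < c" "\<And>i. i \<in> S \<Longrightarrow> av (f i) < c"
  shows "av (sum f S) < c"
  using assms(2)
proof (induction S rule: infinite_finite_induct)
  case (insert x F)
  then have "av (f x) < c" "av (sum f F) < c"
    by simp_all
  moreover have "av (f x + sum f F) \<le> max (av (f x)) (av (sum f F))"
    by (rule av_add_le)
  ultimately show ?case
    using insert.hyps by simp
qed (use assms(1) in simp_all)

lemma av_of_nat_le_1: "av (of_nat n) \<le> 1"
proof (induction n)
  case (Suc n)
  then show ?case
    using av_add_le[of 1 "of_nat n"] by simp
qed simp

lemma av_of_int_le_1: "av (of_int k) \<le> 1"
  by (cases k rule: int_cases2) (simp_all add: av_minus av_of_nat_le_1)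

end

lemma phantom_split_last:
  "phantom p l m = (\<Sum>i<m. of_nat (p ^ i) * l i ^ p ^ (m - i)) + of_nat (p ^ m) * l m"
  unfolding phantom_def lessThan_Suc_atMost[symmetric] by simp

lemma J_times_power_inj:
  assumes p: "prime p" and n: "n \<in> J p" and n': "n' \<in> J p"
    and eq: "n * p ^ m = n' * p ^ m'"
  shows "n = n' \<and> m = m'"
proof -
  have multiplicity: "multiplicity p (k * p ^ j) = j" if "k \<in> J p" for k j
  proof -
    have "k \<noteq> 0" "\<not> p dvd k"
      using that by (auto simp: J_def)
    with p show ?thesis
      by (simp add: prime_elem_multiplicity_mult_distrib not_dvd_imp_multiplicity_0)
  qed
  have "m = m'"
    using multiplicity[OF n, of m] multiplicity[OF n', of m'] eq by simp
  with eq p show ?thesis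
    using prime_gt_0_nat by auto
qed

lemma g_minus_at:
  assumes "prime p" "n \<in> J p"
  shows "g_minus p lam (- int (n * p ^ m)) = - of_nat n * phantom p (lam n) m"
proof -
  have single_term: "{(n', m'). n' \<in> J p \<and> int (n' * p ^ m') = - (- int (n * p ^ m))} = {(n, m)}"
  proof (intro set_eqI iffI)
    fix x
    assume "x \<in> {(n', m'). n' \<in> J p \<and> int (n' * p ^ m') = - (- int (n * p ^ m))}"
    then obtain n' m' where "x = (n', m')" "n' \<in> J p" "n' * p ^ m' = n * p ^ m"
      by (auto simp del: of_nat_mult)
    then show "x \<in> {(n, m)}"
      using J_times_power_inj[OF assms(1) _ assms(2)] by blast
  qed (use assms(2) in simp)
  show ?thesis
    unfolding g_minus_def single_term by simp
qed

lemma g_minus_eq_0: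
  assumes "\<nexists>n m. n \<in> J p \<and> i = - int (n * p ^ m)"
  shows "g_minus p lam i = 0"
proof -
  have no_terms: "{(n, m). n \<in> J p \<and> int (n * p ^ m) = - i} = {}"
    using assms by (auto simp del: of_nat_mult) (metis minus_minus)
  show ?thesis
    unfolding g_minus_def no_terms by simp
qed

locale residue_char = ultrametric_abs av for av :: "'a::field_char_0 \<Rightarrow> real" +
  fixes p :: nat
  assumes prime_p: "prime p"
    and av_p_less_1: "av (of_nat p) < 1"
begin

lemma p_ge_2: "2 \<le> p"
  using prime_p by (rule prime_ge_2_nat)

lemma one_le_p_power: "1 \<le> p ^ k"
  using p_ge_2 by simp

lemma le_p_power: "k \<le> p ^ k"
  using power_gt_expt[of p k] p_ge_2 by simp

lemma le_or_le_if_mult_p_power_le: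
  assumes "a * p ^ j \<le> n * p ^ m"
  shows "a \<le> n \<or> j \<le> m"
proof (rule ccontr)
  assume "\<not> (a \<le> n \<or> j \<le> m)"
  then have "n * p ^ m < a * p ^ m" and "p ^ m \<le> p ^ j"
    using p_ge_2 by (simp_all add: power_increasing)
  then have "n * p ^ m < a * p ^ j"
    by (meson less_le_trans mult_le_mono2)
  with assms show False
    by simp
qed

lemma av_p_pos: "0 < av (of_nat p)"
proof -
  have "av (of_nat p) \<noteq> 0"
    using p_ge_2 by (simp add: av_eq_0_iff)
  then show ?thesis
    using av_nonneg[of "of_nat p"] by linarith
qed

lemma av_of_nat_coprime:
  assumes "\<not> p dvd n"
  shows "av (of_nat n) = 1"
proof -
  have "coprime p n"
    using prime_p assms by (rule prime_imp_coprime_nat)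
  then have "gcd (int n) (int p) = 1"
    by (simp add: coprime_commute gcd_int_def)
  then obtain u v where "u * int n + v * int p = 1"
    using bezout_int by metis
  then have "1 = of_int u * of_nat n + of_int v * (of_nat p :: 'a)"
    by (metis of_int_1 of_int_add of_int_mult of_int_of_nat_eq)
  then have "1 \<le> max (av (of_int u * of_nat n)) (av (of_int v * of_nat p))"
    using av_add_le av_one by metis
  moreover have "av (of_int u * of_nat n) \<le> av (of_nat n)"
    unfolding av_mult by (rule mult_left_le_one_le[OF av_nonneg av_nonneg av_of_int_le_1])
  moreover have "av (of_int v * of_nat p) < 1"
    unfolding av_mult
    using mult_left_le_one_le[OF av_nonneg av_nonneg av_of_int_le_1] av_p_less_1
    by (rule le_less_trans)
  ultimately show ?thesis
    using av_of_nat_le_1[of n] by linarith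
qed

lemma av_p_power_le_1: "av (of_nat p) ^ i \<le> 1"
  using av_p_pos av_p_less_1 by (simp add: power_le_one)

lemma av_phantom_term: "av (of_nat (p ^ i) * x ^ k) = av (of_nat p) ^ i * av x ^ k"
  by (simp add: av_mult av_power)

lemma av_phantom_term_le:
  assumes "av x \<le> 1" "1 \<le> k"
  shows "av (of_nat (p ^ i) * x ^ k) \<le> av x"
proof -
  have "av (of_nat p) ^ i * av x ^ k \<le> av x ^ k"
    by (rule mult_left_le_one_le) (simp_all add: av_nonneg av_p_power_le_1)
  also have "\<dots> \<le> av x"
    using power_decreasing[OF assms(2) av_nonneg assms(1)] by simp
  finally show ?thesis
    unfolding av_phantom_term .
qed

lemma av_phantom_term_less:
  assumes "av x \<le> 1" "1 \<le> k" "av (of_nat p) ^ i < e \<or> av x < e \<or> av x ^ k < e"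
  shows "av (of_nat (p ^ i) * x ^ k) < e"
  using assms(3)
proof (elim disjE)
  assume "av (of_nat p) ^ i < e"
  moreover have "av (of_nat p) ^ i * av x ^ k \<le> av (of_nat p) ^ i"
    using av_p_pos assms(1) by (simp add: mult_left_le power_le_one av_nonneg)
  ultimately show ?thesis
    unfolding av_phantom_term by linarith
next
  assume "av x < e"
  then show ?thesis
    using av_phantom_term_le[OF assms(1,2), of i] by linarith
next
  assume "av x ^ k < e"
  moreover have "av (of_nat p) ^ i * av x ^ k \<le> av x ^ k"
    by (rule mult_left_le_one_le) (simp_all add: av_nonneg av_p_power_le_1)
  ultimately show ?thesis
    unfolding av_phantom_term by linarith
qed

lemma av_phantom_le_1:
  assumes "\<And>i. av (l i) \<le> 1"
  shows "av (phantom p l m) \<le> 1"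
  unfolding phantom_def
proof (rule av_sum_le)
  fix i
  show "av (of_nat (p ^ i) * l i ^ p ^ (m - i)) \<le> 1"
    using av_phantom_term_le[OF assms one_le_p_power] assms order_trans by blast
qed simp

lemma av_phantom_less:
  assumes "\<And>i. av (l i) \<le> 1" "0 < e"
    and "\<And>i. i \<le> m \<Longrightarrow> av (of_nat p) ^ i < e \<or> av (l i) < e \<or> av (l i) ^ p ^ (m - i) < e"
  shows "av (phantom p l m) < e"
  unfolding phantom_def
  using av_phantom_term_less[OF assms(1) one_le_p_power] assms(3)
  by (intro av_sum_less[OF assms(2)]) simp

lemma av_phantom_eventually_eq:
  assumes bound: "\<And>i. av (l i) \<le> 1"
    and unit: "av (l k) = 1"
    and below: "\<And>i. i < k \<Longrightarrow> av (l i) < 1"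
  shows "eventually (\<lambda>m. av (phantom p l m) = av (of_nat p) ^ k) sequentially"
proof -
  define c where "c = av (of_nat p) ^ k"
  have c: "0 < c"
    using av_p_pos by (simp add: c_def)
  have "\<forall>i\<in>{..<k}. eventually (\<lambda>j. av (l i) ^ j < c) sequentially"
    using order_tendstoD(2)[OF LIMSEQ_realpow_zero[OF av_nonneg below] c] by blast
  from eventually_ball_finite[OF finite_lessThan this]
  obtain K where K: "\<And>i j. i < k \<Longrightarrow> K \<le> j \<Longrightarrow> av (l i) ^ j < c"
    unfolding eventually_sequentially by auto
  have "av (phantom p l m) = c" if m: "K + k \<le> m" for m
  proof -
    define f where "f i = of_nat (p ^ i) * l i ^ p ^ (m - i)" for i
    have "k \<in> {..m}"
      using m by simp
    then have "phantom p l m = f k + sum f ({..m} - {k})"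
      unfolding phantom_def f_def[symmetric] by (rule sum.remove[OF finite_atMost])
    moreover have "av (f k) = c"
      by (simp add: f_def c_def av_mult av_power unit)
    moreover have "av (sum f ({..m} - {k})) < c"
    proof (rule av_sum_less[OF c])
      fix i
      assume i: "i \<in> {..m} - {k}"
      have "av (of_nat p) ^ i < c \<or> av (l i) ^ p ^ (m - i) < c"
      proof (cases "i < k")
        case True
        have "K \<le> m - i"
          using True m by simp
        also have "\<dots> \<le> p ^ (m - i)"
          by (rule le_p_power)
        finally show ?thesis
          using K True by blast
      next
        case False
        with i have "k < i"
          by auto
        then show ?thesis
          using av_p_pos av_p_less_1 by (simp add: c_def power_strict_decreasing)
      qed
      then show "av (f i) < c"
        unfolding f_def using av_phantom_term_less[OF bound one_le_p_power] by blast
    qed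
    ultimately show ?thesis
      using av_add_eq_left by simp
  qed
  then show ?thesis
    unfolding eventually_sequentially c_def by blast
qed

lemma av_witt_less_1_if_phantom_tendsto_0:
  assumes bound: "\<And>i. av (l i) \<le> 1"
    and lim: "(\<lambda>m. av (phantom p l m)) \<longlonglongrightarrow> 0"
  shows "av (l k) < 1"
proof (rule ccontr)
  assume "\<not> av (l k) < 1"
  define k0 where "k0 = (LEAST k. \<not> av (l k) < 1)"
  have "\<not> av (l k0) < 1"
    unfolding k0_def by (rule LeastI) fact
  then have "av (l k0) = 1"
    using bound[of k0] by linarith
  moreover have "av (l i) < 1" if "i < k0" for i
    using not_less_Least[of i "\<lambda>k. \<not> av (l k) < 1"] that unfolding k0_def by blast
  ultimately have "eventually (\<lambda>m. av (phantom p l m) = av (of_nat p) ^ k0) sequentially"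
    by (intro av_phantom_eventually_eq bound) auto
  with lim have "(\<lambda>m. av (of_nat p) ^ k0) \<longlonglongrightarrow> 0"
    using tendsto_cong by force
  then have "av (of_nat p) ^ k0 = 0"
    by (simp add: LIMSEQ_const_iff)
  then show False
    using av_p_pos by simp
qed

definition phantoms_tend_to_zero :: "nat set \<Rightarrow> (nat \<Rightarrow> nat \<Rightarrow> 'a) \<Rightarrow> bool" where
  "phantoms_tend_to_zero N lam \<longleftrightarrow>
     (\<forall>e>0. \<exists>M. \<forall>n\<in>N. \<forall>m. M \<le> n * p ^ m \<longrightarrow> av (phantom p (lam n) m) < e)"

lemma av_witt_entry_tends_to_zero_if_phantoms_tend_to_zero:
  assumes bound: "\<And>n i. n \<in> N \<Longrightarrow> av (lam n i) \<le> 1"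
    and phantoms: "phantoms_tend_to_zero N lam"
    and e: "0 < e"
  shows "\<exists>N0. \<forall>n\<in>N. N0 \<le> n \<longrightarrow> av (lam n m) < e"
  using e
proof (induction m arbitrary: e rule: less_induct)
  case (less m)
  define c where "c = e * av (of_nat p) ^ m"
  have c: "0 < c"
    using less.prems av_p_pos by (simp add: c_def)
  have "\<forall>i\<in>{..<m}. eventually (\<lambda>N0. \<forall>n\<in>N. N0 \<le> n \<longrightarrow> av (lam n i) < c) sequentially"
    using less.IH[OF _ c] unfolding eventually_sequentially by (meson lessThan_iff order_trans)
  from eventually_ball_finite[OF finite_lessThan this]
  obtain N1 where N1: "\<And>i n. i < m \<Longrightarrow> n \<in> N \<Longrightarrow> N1 \<le> n \<Longrightarrow> av (lam n i) < c"
    unfolding eventually_sequentially by auto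
  obtain M where M: "\<And>n m. n \<in> N \<Longrightarrow> M \<le> n * p ^ m \<Longrightarrow> av (phantom p (lam n) m) < c"
    using phantoms c unfolding phantoms_tend_to_zero_def by blast
  show ?case
  proof (intro exI[of _ "max N1 M"] ballI impI)
    fix n
    assume n: "n \<in> N" and large: "max N1 M \<le> n"
    have "M \<le> n"
      using large by simp
    also have "n \<le> n * p ^ m"
      using one_le_p_power[of m] by simp
    finally have "av (phantom p (lam n) m) < c"
      by (rule M[OF n])
    moreover have "av (\<Sum>i<m. of_nat (p ^ i) * lam n i ^ p ^ (m - i)) < c"
    proof (rule av_sum_less[OF c])
      fix i
      assume "i \<in> {..<m}"
      then have "av (lam n i) < c"
        using N1[OF _ n] large by simp
      then show "av (of_nat (p ^ i) * lam n i ^ p ^ (m - i)) < c"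
        using av_phantom_term_le[OF bound[OF n, of i] one_le_p_power[of "m - i"], of i] by linarith
    qed
    moreover have "av (of_nat (p ^ m) * lam n m)
        \<le> max (av (phantom p (lam n) m)) (av (\<Sum>i<m. of_nat (p ^ i) * lam n i ^ p ^ (m - i)))"
      using av_diff_le[of "phantom p (lam n) m" "\<Sum>i<m. of_nat (p ^ i) * lam n i ^ p ^ (m - i)"]
      by (simp add: phantom_split_last)
    ultimately have "av (of_nat p) ^ m * av (lam n m) < e * av (of_nat p) ^ m"
      by (simp add: av_mult av_power c_def)
    then show "av (lam n m) < e"
      using av_p_pos by (simp add: mult.commute)
  qed
qed

lemma av_witt_entry_less_1_if_phantoms_tend_to_zero:
  assumes bound: "\<And>n i. n \<in> N \<Longrightarrow> av (lam n i) \<le> 1"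
    and phantoms: "phantoms_tend_to_zero N lam"
    and n: "n \<in> N" "1 \<le> n"
  shows "av (lam n k) < 1"
proof (rule av_witt_less_1_if_phantom_tendsto_0)
  show "av (lam n i) \<le> 1" for i
    using bound n by blast
  show "(\<lambda>m. av (phantom p (lam n) m)) \<longlonglongrightarrow> 0"
  proof (rule order_tendstoI)
    show "eventually (\<lambda>m. a < av (phantom p (lam n) m)) sequentially" if "a < 0" for a
      using that av_nonneg by (simp add: order.strict_trans2)
    show "eventually (\<lambda>m. av (phantom p (lam n) m) < e) sequentially" if "0 < e" for e
    proof -
      obtain M where M: "\<And>m. M \<le> n * p ^ m \<Longrightarrow> av (phantom p (lam n) m) < e"
        using phantoms \<open>0 < e\<close> n(1) unfolding phantoms_tend_to_zero_def by blast
      have "M \<le> n * p ^ m" if "M \<le> m" for m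
      proof -
        have "m \<le> p ^ m"
          by (rule le_p_power)
        also have "\<dots> \<le> n * p ^ m"
          using n(2) by simp
        finally show ?thesis
          using that by simp
      qed
      then show ?thesis
        unfolding eventually_sequentially using M by blast
    qed
  qed
qed

lemma phantoms_tend_to_zero_if_witt_entries:
  assumes bound: "\<And>n i. n \<in> N \<Longrightarrow> av (lam n i) \<le> 1"
    and less_1: "\<And>n i. n \<in> N \<Longrightarrow> av (lam n i) < 1"
    and entries: "\<And>i e. 0 < e \<Longrightarrow> \<exists>N0. \<forall>n\<in>N. N0 \<le> n \<longrightarrow> av (lam n i) < e"
  shows "phantoms_tend_to_zero N lam"
  unfolding phantoms_tend_to_zero_def
proof (intro allI impI)
  fix e :: real
  assume e: "0 < e"
  obtain I where I: "av (of_nat p) ^ I < e"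
    using order_tendstoD(2)[OF LIMSEQ_realpow_zero[OF av_nonneg av_p_less_1] e]
    unfolding eventually_sequentially by blast
  have "\<forall>i\<in>{..<I}. eventually (\<lambda>N0. \<forall>n\<in>N. N0 \<le> n \<longrightarrow> av (lam n i) < e) sequentially"
    using entries[OF e] unfolding eventually_sequentially by (meson order_trans)
  from eventually_ball_finite[OF finite_lessThan this]
  obtain N0 where N0: "\<And>i n. i < I \<Longrightarrow> n \<in> N \<Longrightarrow> N0 \<le> n \<Longrightarrow> av (lam n i) < e"
    unfolding eventually_sequentially by auto
  have "eventually (\<lambda>j. \<forall>n\<in>{..<N0} \<inter> N. \<forall>i\<in>{..<I}. av (lam n i) ^ j < e) sequentially"
    using order_tendstoD(2)[OF LIMSEQ_realpow_zero[OF av_nonneg less_1] e]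
    by (simp add: eventually_ball_finite_distrib)
  then obtain K where K: "\<And>n i j. n \<in> N \<Longrightarrow> n < N0 \<Longrightarrow> i < I \<Longrightarrow> K \<le> j \<Longrightarrow> av (lam n i) ^ j < e"
    unfolding eventually_sequentially by fastforce
  show "\<exists>M. \<forall>n\<in>N. \<forall>m. M \<le> n * p ^ m \<longrightarrow> av (phantom p (lam n) m) < e"
  proof (intro exI[of _ "N0 * p ^ (K + I)"] ballI allI impI)
    fix n m
    assume n: "n \<in> N" and large: "N0 * p ^ (K + I) \<le> n * p ^ m"
    have large_n_or_m: "N0 \<le> n \<or> K + I \<le> m"
      using large by (rule le_or_le_if_mult_p_power_le)
    show "av (phantom p (lam n) m) < e"
    proof (rule av_phantom_less[OF bound[OF n] e])
      fix i
      assume "i \<le> m"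
      consider "I \<le> i" | "i < I" "N0 \<le> n" | "i < I" "n < N0" "K + I \<le> m"
        using large_n_or_m by linarith
      then show "av (of_nat p) ^ i < e \<or> av (lam n i) < e \<or> av (lam n i) ^ p ^ (m - i) < e"
      proof cases
        case 1
        then have "av (of_nat p) ^ i \<le> av (of_nat p) ^ I"
          using av_p_pos av_p_less_1 by (simp add: power_decreasing)
        with I show ?thesis
          by linarith
      next
        case 2
        with N0 n show ?thesis
          by blast
      next
        case 3
        then have "K \<le> m - i"
          by simp
        also have "\<dots> \<le> p ^ (m - i)"
          by (rule le_p_power)
        finally show ?thesis
          using K[OF n] 3 by blast
      qed
    qed
  qed
qed

lemma phantoms_tend_to_zero_iff_witt_entries:
  assumes bound: "\<And>n i. n \<in> N \<Longrightarrow> av (lam n i) \<le> 1"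
    and positive: "\<And>n. n \<in> N \<Longrightarrow> 1 \<le> n"
  shows "phantoms_tend_to_zero N lam \<longleftrightarrow>
    (\<forall>n\<in>N. \<forall>m. av (lam n m) < 1) \<and> (\<forall>m. \<forall>e>0. \<exists>N0. \<forall>n\<in>N. N0 \<le> n \<longrightarrow> av (lam n m) < e)"
proof (intro iffI conjI ballI allI impI)
  fix n m
  assume phantoms: "phantoms_tend_to_zero N lam" and n: "n \<in> N"
  show "av (lam n m) < 1"
    using av_witt_entry_less_1_if_phantoms_tend_to_zero[where N = N, OF bound phantoms n positive[OF n]] .
next
  fix m and e :: real
  assume "phantoms_tend_to_zero N lam" and "0 < e"
  with bound show "\<exists>N0. \<forall>n\<in>N. N0 \<le> n \<longrightarrow> av (lam n m) < e"
    by (rule av_witt_entry_tends_to_zero_if_phantoms_tend_to_zero)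
next
  assume "(\<forall>n\<in>N. \<forall>m. av (lam n m) < 1) \<and>
    (\<forall>m. \<forall>e>0. \<exists>N0. \<forall>n\<in>N. N0 \<le> n \<longrightarrow> av (lam n m) < e)"
  then show "phantoms_tend_to_zero N lam"
    by (intro phantoms_tend_to_zero_if_witt_entries bound) auto
qed

lemma av_g_minus_at:
  assumes "n \<in> J p"
  shows "av (g_minus p lam (- int (n * p ^ m))) = av (phantom p (lam n) m)"
  unfolding g_minus_at[OF prime_p assms] av_mult av_minus
  using assms av_of_nat_coprime[of n] by (simp add: J_def)

lemma av_g_minus_cases:
  obtains (coefficient) n m where "n \<in> J p" "i = - int (n * p ^ m)"
      "av (g_minus p lam i) = av (phantom p (lam n) m)"
    | (zero) "av (g_minus p lam i) = 0"
proof (cases "\<exists>n m. n \<in> J p \<and> i = - int (n * p ^ m)")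
  case True
  then obtain n m where "n \<in> J p" "i = - int (n * p ^ m)"
    by blast
  with coefficient show ?thesis
    using av_g_minus_at by blast
next
  case False
  show ?thesis
    by (rule zero) (simp add: g_minus_eq_0[OF False])
qed

lemma g_minus_in_E_K_iff:
  assumes bound: "\<And>n i. n \<in> J p \<Longrightarrow> av (lam n i) \<le> 1"
  shows "g_minus p lam \<in> E_K av \<longleftrightarrow> phantoms_tend_to_zero (J p) lam"
proof
  assume g: "g_minus p lam \<in> E_K av"
  show "phantoms_tend_to_zero (J p) lam"
    unfolding phantoms_tend_to_zero_def
  proof (intro allI impI)
    fix e :: real
    assume "0 < e"
    with g obtain N :: int where N: "\<And>i. i \<le> N \<Longrightarrow> av (g_minus p lam i) < e"
      unfolding E_K_def by blast
    have "av (phantom p (lam n) m) < e" if n: "n \<in> J p" and "nat (- N) \<le> n * p ^ m" for n m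
    proof -
      have "- int (n * p ^ m) \<le> N"
        using that(2) by (simp only: nat_le_iff)
      then show ?thesis
        using N av_g_minus_at[OF n] by metis
    qed
    then show "\<exists>M. \<forall>n\<in>J p. \<forall>m. M \<le> n * p ^ m \<longrightarrow> av (phantom p (lam n) m) < e"
      by blast
  qed
next
  assume phantoms: "phantoms_tend_to_zero (J p) lam"
  have "av (g_minus p lam i) \<le> 1" for i
  proof (cases rule: av_g_minus_cases[where i = i and lam = lam])
    case (coefficient n m)
    then show ?thesis
      using av_phantom_le_1[OF bound[OF coefficient(1)]] by simp
  qed simp
  moreover have "\<exists>N. \<forall>i\<le>N. av (g_minus p lam i) < e" if e: "0 < e" for e
  proof -
    obtain M where M: "\<And>n m. n \<in> J p \<Longrightarrow> M \<le> n * p ^ m \<Longrightarrow> av (phantom p (lam n) m) < e"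
      using phantoms e unfolding phantoms_tend_to_zero_def by blast
    have "av (g_minus p lam i) < e" if i: "i \<le> - int M" for i
    proof (cases rule: av_g_minus_cases[where i = i and lam = lam])
      case (coefficient n m)
      with i have "M \<le> n * p ^ m"
        by linarith
      with coefficient show ?thesis
        using M by simp
    qed (use e in simp)
    then show ?thesis
      by blast
  qed
  ultimately show "g_minus p lam \<in> E_K av"
    unfolding E_K_def by (intro CollectI conjI bdd_aboveI2) auto
qed

end

theorem proposition2p2p3:
  fixes av :: "'a::field_char_0 \<Rightarrow> real" and p :: nat
    and lam :: "nat \<Rightarrow> nat \<Rightarrow> 'a"
  assumes "valued_field_setup av p"
    and "\<forall>n\<in>J p. lam n \<in> witt_OK av"
  shows "g_minus p lam \<in> E_K av \<longleftrightarrow>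
           ((\<forall>n\<in>J p. \<forall>m. av (lam n m) < 1) \<and>
            (\<forall>m. \<forall>e>0. \<exists>N. \<forall>n\<in>J p. N \<le> n \<longrightarrow> av (lam n m) < e))"
proof -
  interpret residue_char av p
    using assms(1) by unfold_locales (simp_all add: valued_field_setup_def)
  have bound: "\<And>n i. n \<in> J p \<Longrightarrow> av (lam n i) \<le> 1"
    using assms(2) by (simp add: witt_OK_def)
  have "g_minus p lam \<in> E_K av \<longleftrightarrow> phantoms_tend_to_zero (J p) lam"
    using bound by (rule g_minus_in_E_K_iff)
  also have "\<dots> \<longleftrightarrow> (\<forall>n\<in>J p. \<forall>m. av (lam n m) < 1) \<and>
      (\<forall>m. \<forall>e>0. \<exists>N. \<forall>n\<in>J p. N \<le> n \<longrightarrow> av (lam n m) < e)"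
    using bound by (rule phantoms_tend_to_zero_iff_witt_entries) (auto simp: J_def)
  finally show ?thesis .
qed

end
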